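(* Let $\mathcal I$ index a finite set of strategies for the iterated Prisoner's Dilemma. Suppose the strategy indexed by $i^*\in\mathcal I$ is a strictly firm memory-one vector $\mathbf p^{i^*}$ with initial play $d$. If for no other $j\in\mathcal I$ is the strategy vector $\mathbf p^j$ firm, then $i^*$ is an ESS for the game $\{A_{ij}:i,j\in\mathcal I\}$.
   Context: Iterated Prisoner's Dilemma with normalized payoffs $T=1>R>P>S=0$, $2R>1$; outcomes ordered $cc,cd,dc,dd$ (own play first); payoff vectors $\mathbf S_X=(R,0,1,P)$, $\mathbf S_Y=(R,1,0,P)$. A memory-one strategy vector is $\mathbf p\in[0,1]^4$, $p_k$ the probability of playing $c$ after the $k$-th outcome, outcomes labeled from the player's own perspective; it is firm if $p_4=0$. A strategy is such a vector together with an initial play. For a strategy pattern of the opponent Y (any possibly random, history-dependent rule), a limit distribution is a limit point $\mathbf v$ of the Cesàro averages of the round-$n$ outcome distributions, with $s_X=\langle\mathbf v\cdot\mathbf S_X\rangle$, $s_Y=\langle\mathbf v\cdot\mathbf S_Y\rangle$. A memory-one $\mathbf p$ for X is strictly firm if it is firm and for every strategy pattern of Y and every associated limit distribution, $s_Y\ge P$ implies $v_4=1$. $A_{ij}$ is the long-run (Cesàro-limit) average payoff of X when X uses strategy $i$ and Y uses strategy $j$. $i^*$ is an ESS if $A_{ji^*}<A_{i^*i^*}$ for all $j\ne i^*$. *)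

theory Defs
  imports Complex_Main
begin

text \<open>Outcomes of one round, from X's perspective (own play first):
  CC = cc, CD = cd, DC = dc, DD = dd.\<close>
datatype outcome = CC | CD | DC | DD

definition outcomes :: "outcome set" where
  "outcomes = {CC, CD, DC, DD}"

fun swap :: "outcome \<Rightarrow> outcome" where
  "swap CC = CC" | "swap CD = DC" | "swap DC = CD" | "swap DD = DD"

fun xc :: "outcome \<Rightarrow> bool" where
  "xc CC = True" | "xc CD = True" | "xc DC = False" | "xc DD = False"

fun yc :: "outcome \<Rightarrow> bool" where
  "yc CC = True" | "yc CD = False" | "yc DC = True" | "yc DD = False"

text \<open>Payoff vectors S_X = (R,0,1,P), S_Y = (R,1,0,P) (T = 1, S = 0).\<close>
fun SX :: "real \<Rightarrow> real \<Rightarrow> outcome \<Rightarrow> real" where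
  "SX R P CC = R" | "SX R P CD = 0" | "SX R P DC = 1" | "SX R P DD = P"

fun SY :: "real \<Rightarrow> real \<Rightarrow> outcome \<Rightarrow> real" where
  "SY R P CC = R" | "SY R P CD = 1" | "SY R P DC = 0" | "SY R P DD = P"

definition choice_prob :: "real \<Rightarrow> bool \<Rightarrow> real" where
  "choice_prob pc b = (if b then pc else 1 - pc)"

text \<open>A memory-one strategy vector: p k is the probability of playing c after
  outcome k (from the player's own perspective), with p in [0,1]^4.\<close>
definition memory_one :: "(outcome \<Rightarrow> real) \<Rightarrow> bool" where
  "memory_one p \<longleftrightarrow> (\<forall>k. 0 \<le> p k \<and> p k \<le> 1)"

definition firm :: "(outcome \<Rightarrow> real) \<Rightarrow> bool" where
  "firm p \<longleftrightarrow> p DD = 0"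

text \<open>A strategy pattern of Y: a (behavioural) possibly random,
  history-dependent rule, giving for each history (list of past outcomes
  from X's perspective, most recent first) the probability that Y plays c.\<close>
definition pattern :: "(outcome list \<Rightarrow> real) \<Rightarrow> bool" where
  "pattern q \<longleftrightarrow> (\<forall>h. 0 \<le> q h \<and> q h \<le> 1)"

text \<open>Probability of a history (most recent outcome first) when X uses the
  memory-one vector p with initial play x0 (True = c) and Y uses pattern q.\<close>
fun hist_prob :: "(outcome \<Rightarrow> real) \<Rightarrow> bool \<Rightarrow> (outcome list \<Rightarrow> real)
    \<Rightarrow> outcome list \<Rightarrow> real" where
  "hist_prob p x0 q [] = 1"
| "hist_prob p x0 q (k # h) =
     hist_prob p x0 q h
     * choice_prob (if h = [] then (if x0 then 1 else 0) else p (hd h)) (xc k)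
     * choice_prob (q h) (yc k)"

text \<open>Distribution of the outcome of round n (rounds numbered from 0).\<close>
definition round_dist :: "(outcome \<Rightarrow> real) \<Rightarrow> bool \<Rightarrow> (outcome list \<Rightarrow> real)
    \<Rightarrow> nat \<Rightarrow> outcome \<Rightarrow> real" where
  "round_dist p x0 q n k =
     (\<Sum>h\<in>{h. set h \<subseteq> outcomes \<and> length h = Suc n \<and> hd h = k}. hist_prob p x0 q h)"

definition cesaro :: "(outcome \<Rightarrow> real) \<Rightarrow> bool \<Rightarrow> (outcome list \<Rightarrow> real)
    \<Rightarrow> nat \<Rightarrow> outcome \<Rightarrow> real" where
  "cesaro p x0 q N k = (\<Sum>n<N. round_dist p x0 q n k) / real N"

definition limit_dist :: "(outcome \<Rightarrow> real) \<Rightarrow> bool \<Rightarrow> (outcome list \<Rightarrow> real)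
    \<Rightarrow> (outcome \<Rightarrow> real) \<Rightarrow> bool" where
  "limit_dist p x0 q v \<longleftrightarrow>
     (\<exists>r. strict_mono r \<and> (\<forall>k. (\<lambda>N. cesaro p x0 q (r N) k) \<longlonglongrightarrow> v k))"

definition dot :: "(outcome \<Rightarrow> real) \<Rightarrow> (outcome \<Rightarrow> real) \<Rightarrow> real" where
  "dot v S = (\<Sum>k\<in>outcomes. v k * S k)"

definition strictly_firm :: "real \<Rightarrow> real \<Rightarrow> (outcome \<Rightarrow> real) \<Rightarrow> bool" where
  "strictly_firm R P p \<longleftrightarrow> firm p \<and>
     (\<forall>x0 q v. pattern q \<longrightarrow> limit_dist p x0 q v \<longrightarrow>
        dot v (SY R P) \<ge> P \<longrightarrow> v DD = 1)"

text \<open>Strategy pattern induced by a memory-one strategy (vector, initial play)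
  used by Y: Y sees outcomes from its own perspective.\<close>
definition mem1_pattern :: "(outcome \<Rightarrow> real) \<Rightarrow> bool \<Rightarrow> outcome list \<Rightarrow> real" where
  "mem1_pattern p y0 h = (if h = [] then (if y0 then 1 else 0) else p (swap (hd h)))"

definition payoffA :: "real \<Rightarrow> real \<Rightarrow> (outcome \<Rightarrow> real) \<times> bool
    \<Rightarrow> (outcome \<Rightarrow> real) \<times> bool \<Rightarrow> real" where
  "payoffA R P si sj =
     lim (\<lambda>N. dot (cesaro (fst si) (snd si) (mem1_pattern (fst sj) (snd sj)) N) (SX R P))"

definition ESS :: "'i set \<Rightarrow> ('i \<Rightarrow> 'i \<Rightarrow> real) \<Rightarrow> 'i \<Rightarrow> bool" where
  "ESS I A istar \<longleftrightarrow> (\<forall>j\<in>I. j \<noteq> istar \<longrightarrow> A j istar < A istar istar)"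

end

theory Submission
  imports Defs "HOL-Analysis.Analysis"
begin

text \<open>Against itself, a firm strategy opening with d never leaves dd and earns P. Against a
  memory-one strategy the play is a finite Markov chain, whose Cesaro averages converge (any two
  limit points of the averaged powers of a stochastic matrix are invariant and absorb each other).
  The limit v is a stationary distribution; if v were concentrated on dd, the opponent would never
  leave dd, i.e. be firm. So a non-firm opponent yields v DD < 1, strict firmness forces the
  opponent's long-run payoff below P, and by symmetry of the payoff vectors that payoff is A j i*.\<close>

section \<open>Cesaro averages of stochastic matrices\<close>

lemma bounded_bilinear_matrix_mult:
  "bounded_bilinear ((**) :: real^'n::finite^'m::finite \<Rightarrow> real^'p::finite^'n \<Rightarrow> real^'p^'m)"
  unfolding bilinear_conv_bounded_bilinear[symmetric] bilinear_def
  by (auto intro!: linearI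
      simp: vec_eq_iff matrix_matrix_mult_def sum.distrib algebra_simps sum_distrib_left)

definition stochastic :: "real^'n::finite^'n \<Rightarrow> bool" where
  "stochastic A \<longleftrightarrow> (\<forall>i j. 0 \<le> A$i$j) \<and> (\<forall>i. (\<Sum>j\<in>UNIV. A$i$j) = 1)"

lemma closed_stochastic: "closed {A :: real^'n::finite^'n. stochastic A}"
  unfolding stochastic_def
  by (intro closed_Collect_conj closed_Collect_all closed_Collect_le closed_Collect_eq continuous_intros)

lemma norm_stochastic_le:
  fixes A :: "real^'n::finite^'n"
  assumes "stochastic A" shows "norm A \<le> CARD('n)"
proof -
  have "norm A \<le> (\<Sum>i\<in>UNIV. norm (A$i))"
    unfolding norm_vec_def by (rule L2_set_le_sum) simp
  also have "\<dots> \<le> (\<Sum>i\<in>(UNIV::'n set). 1)"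
  proof (rule sum_mono)
    fix i
    have "norm (A$i) \<le> (\<Sum>j\<in>UNIV. \<bar>A$i$j\<bar>)" by (rule norm_le_l1_cart)
    also have "\<dots> = 1" using assms by (simp add: stochastic_def)
    finally show "norm (A$i) \<le> 1" .
  qed
  finally show ?thesis by simp
qed

lemmas matrix_mult_sum_left = bounded_bilinear.sum_left[OF bounded_bilinear_matrix_mult]
  and matrix_mult_sum_right = bounded_bilinear.sum_right[OF bounded_bilinear_matrix_mult]
  and matrix_mult_scaleR_left = bounded_bilinear.scaleR_left[OF bounded_bilinear_matrix_mult]
  and matrix_mult_scaleR_right = bounded_bilinear.scaleR_right[OF bounded_bilinear_matrix_mult]
  and tendsto_matrix_mult = bounded_bilinear.tendsto[OF bounded_bilinear_matrix_mult]

lemma bounded_bilinear_vector_matrix_mult: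
  "bounded_bilinear ((v*) :: real^'m::finite \<Rightarrow> real^'n::finite^'m \<Rightarrow> real^'n)"
  unfolding bilinear_conv_bounded_bilinear[symmetric] bilinear_def
  by (auto intro!: linearI
      simp: vec_eq_iff vector_matrix_mult_def sum.distrib algebra_simps sum_distrib_left)

lemmas vector_matrix_mult_sum_right = bounded_bilinear.sum_right[OF bounded_bilinear_vector_matrix_mult]
  and vector_matrix_mult_scaleR_right = bounded_bilinear.scaleR_right[OF bounded_bilinear_vector_matrix_mult]
  and tendsto_vector_matrix_mult = bounded_bilinear.tendsto[OF bounded_bilinear_vector_matrix_mult]

lemma stochastic_mat_1: "stochastic (mat 1 :: real^'n::finite^'n)"
  by (simp add: stochastic_def mat_def)

lemma stochastic_matrix_mult:
  assumes "stochastic A" "stochastic B" shows "stochastic (A ** B)"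
proof -
  have "(\<Sum>j\<in>UNIV. (A ** B)$i$j) = (\<Sum>k\<in>UNIV. A$i$k * (\<Sum>j\<in>UNIV. B$k$j))" for i
    by (simp add: matrix_matrix_mult_def sum_distrib_left) (rule sum.swap)
  with assms show ?thesis
    by (auto simp: stochastic_def matrix_matrix_mult_def intro: sum_nonneg)
qed

fun matpow :: "real^'n::finite^'n \<Rightarrow> nat \<Rightarrow> real^'n^'n" where
  "matpow M 0 = mat 1"
| "matpow M (Suc n) = matpow M n ** M"

lemma matpow_commute: "M ** matpow M n = matpow M n ** M"
  by (induction n) (simp_all add: matrix_mul_assoc)

lemma stochastic_matpow: "stochastic M \<Longrightarrow> stochastic (matpow M n)"
  by (induction n) (simp_all add: stochastic_mat_1 stochastic_matrix_mult)

definition mat_avg :: "real^'n::finite^'n \<Rightarrow> nat \<Rightarrow> real^'n^'n" where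
  "mat_avg M N = (1 / real N) *\<^sub>R (\<Sum>n<N. matpow M n)"

lemma stochastic_mat_avg:
  assumes "stochastic M" "N > 0" shows "stochastic (mat_avg M N)"
proof -
  have entry: "mat_avg M N $ i $ j = (\<Sum>n<N. matpow M n $ i $ j) / real N" for i j
    by (simp add: mat_avg_def)
  have "(\<Sum>j\<in>UNIV. mat_avg M N $ i $ j) = (\<Sum>n<N. \<Sum>j\<in>UNIV. matpow M n $ i $ j) / real N" for i
    unfolding entry sum_divide_distrib[symmetric] by (rule arg_cong[where f = "\<lambda>x. x / _"], rule sum.swap)
  moreover have "0 \<le> mat_avg M N $ i $ j" for i j
    unfolding entry using stochastic_matpow[OF assms(1)]
    by (intro divide_nonneg_nonneg sum_nonneg) (auto simp: stochastic_def)
  ultimately show ?thesis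
    using stochastic_matpow[OF assms(1)] assms(2) by (simp add: stochastic_def)
qed

lemma norm_mat_avg_le:
  fixes M :: "real^'n::finite^'n"
  assumes "stochastic M" shows "norm (mat_avg M N) \<le> CARD('n)"
  using norm_stochastic_le[OF stochastic_mat_avg[OF assms]] by (cases "N = 0") (simp_all add: mat_avg_def)

lemma mat_avg_mult_sub:
  "mat_avg M N ** M - mat_avg M N = (1 / real N) *\<^sub>R (matpow M N - mat 1)"
  "M ** mat_avg M N - mat_avg M N = (1 / real N) *\<^sub>R (matpow M N - mat 1)"
proof -
  have "(\<Sum>n<N. matpow M n) ** M - (\<Sum>n<N. matpow M n) = matpow M N - mat 1"
    using sum_lessThan_telescope[of "matpow M" N]
    by (simp add: matrix_mult_sum_left sum_subtractf)
  then show "mat_avg M N ** M - mat_avg M N = (1 / real N) *\<^sub>R (matpow M N - mat 1)"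
    by (simp add: mat_avg_def matrix_mult_scaleR_left scaleR_diff_right[symmetric])
  then show "M ** mat_avg M N - mat_avg M N = (1 / real N) *\<^sub>R (matpow M N - mat 1)"
    by (simp add: mat_avg_def matrix_mult_scaleR_left matrix_mult_scaleR_right matrix_mult_sum_left
        matrix_mult_sum_right matpow_commute)
qed

lemma mat_avg_mult_sub_tendsto_0:
  fixes M :: "real^'n::finite^'n"
  assumes "stochastic M"
  shows "(\<lambda>N. mat_avg M N ** M - mat_avg M N) \<longlonglongrightarrow> 0"
    and "(\<lambda>N. M ** mat_avg M N - mat_avg M N) \<longlonglongrightarrow> 0"
proof -
  have bound: "norm (matpow M N - mat 1) \<le> 2 * real CARD('n)" for N
    using norm_triangle_ineq4[of "matpow M N" "mat 1"] norm_stochastic_le[OF stochastic_matpow[OF assms, of N]]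
      norm_stochastic_le[OF stochastic_mat_1, where 'n='n]
    by linarith
  have "(\<lambda>N. (1 / real N) *\<^sub>R (matpow M N - mat 1)) \<longlonglongrightarrow> 0"
  proof (rule Lim_null_comparison)
    show "\<forall>\<^sub>F N in sequentially.
        norm ((1 / real N) *\<^sub>R (matpow M N - mat 1)) \<le> 2 * real CARD('n) * (1 / real N)"
      using bound by (intro always_eventually allI) (simp add: divide_right_mono)
    show "(\<lambda>N. 2 * real CARD('n) * (1 / real N)) \<longlonglongrightarrow> 0"
      by (rule tendsto_mult_right_zero[OF lim_inverse_n'])
  qed
  then show "(\<lambda>N. mat_avg M N ** M - mat_avg M N) \<longlonglongrightarrow> 0"
    and "(\<lambda>N. M ** mat_avg M N - mat_avg M N) \<longlonglongrightarrow> 0"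
    by (simp_all only: mat_avg_mult_sub)
qed

lemma mat_avg_limit_point_invariant:
  assumes "stochastic M" "strict_mono r" "(\<lambda>N. mat_avg M (r N)) \<longlonglongrightarrow> L"
  shows "L ** M = L" and "M ** L = L"
proof -
  note diff_0 = mat_avg_mult_sub_tendsto_0[OF assms(1), THEN LIMSEQ_subseq_LIMSEQ, OF assms(2),
      unfolded o_def]
  have "(\<lambda>N. mat_avg M (r N) ** M - mat_avg M (r N)) \<longlonglongrightarrow> L ** M - L"
    by (intro tendsto_diff tendsto_matrix_mult assms(3) tendsto_const)
  with diff_0(1) have "L ** M - L = 0" using LIMSEQ_unique by blast
  then show "L ** M = L" by simp
  have "(\<lambda>N. M ** mat_avg M (r N) - mat_avg M (r N)) \<longlonglongrightarrow> M ** L - L"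
    by (intro tendsto_diff tendsto_matrix_mult assms(3) tendsto_const)
  with diff_0(2) have "M ** L - L = 0" using LIMSEQ_unique by blast
  then show "M ** L = L" by simp
qed

lemma mat_avg_mult_invariant:
  assumes "L ** M = L" "M ** L = L" "N > 0"
  shows "mat_avg M N ** L = L" and "L ** mat_avg M N = L"
proof -
  have "matpow M n ** L = L" for n
    by (induction n) (simp_all add: matrix_mul_assoc[symmetric] assms(2))
  then show "mat_avg M N ** L = L"
    using assms(3) by (simp add: mat_avg_def matrix_mult_scaleR_left matrix_mult_sum_left
        sum_constant_scaleR del: sum_constant)
  have "L ** matpow M n = L" for n
    by (induction n) (simp_all add: matrix_mul_assoc assms(1))
  then show "L ** mat_avg M N = L"
    using assms(3) by (simp add: mat_avg_def matrix_mult_scaleR_right matrix_mult_sum_right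
        sum_constant_scaleR del: sum_constant)
qed

text \<open>Since both limit points are M-invariant on either side, each absorbs the averages, so
  L1 L2 = L2 and L1 L2 = L1.\<close>
lemma mat_avg_limit_points_eq:
  assumes "stochastic M"
    and "strict_mono r1" "(\<lambda>N. mat_avg M (r1 N)) \<longlonglongrightarrow> L1"
    and "strict_mono r2" "(\<lambda>N. mat_avg M (r2 N)) \<longlonglongrightarrow> L2"
  shows "L1 = L2"
proof -
  note inv1 = mat_avg_limit_point_invariant[OF assms(1-3)]
    and inv2 = mat_avg_limit_point_invariant[OF assms(1,4,5)]
  have pos: "\<forall>\<^sub>F N in sequentially. r N > 0" if "strict_mono r" for r :: "nat \<Rightarrow> nat"
    using eventually_gt_at_top[of 0] by (rule eventually_mono) (meson less_le_trans seq_suble that)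
  have "(\<lambda>N. mat_avg M (r1 N) ** L2) \<longlonglongrightarrow> L1 ** L2"
    by (intro tendsto_matrix_mult assms(3) tendsto_const)
  moreover have "(\<lambda>N. mat_avg M (r1 N) ** L2) \<longlonglongrightarrow> L2"
    by (rule tendsto_eventually)
       (use pos[OF assms(2)] in \<open>eventually_elim, simp add: mat_avg_mult_invariant[OF inv2]\<close>)
  ultimately have "L1 ** L2 = L2" using LIMSEQ_unique by blast
  moreover have "(\<lambda>N. L1 ** mat_avg M (r2 N)) \<longlonglongrightarrow> L1 ** L2"
    by (intro tendsto_matrix_mult assms(5) tendsto_const)
  moreover have "(\<lambda>N. L1 ** mat_avg M (r2 N)) \<longlonglongrightarrow> L1"
    by (rule tendsto_eventually)
       (use pos[OF assms(4)] in \<open>eventually_elim, simp add: mat_avg_mult_invariant[OF inv1]\<close>)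
  ultimately show ?thesis using LIMSEQ_unique by metis
qed

lemma LIMSEQ_if_bounded_unique_subsequential_limit:
  fixes x :: "nat \<Rightarrow> 'a::heine_borel"
  assumes "bounded (range x)" and "\<And>r l. strict_mono r \<Longrightarrow> (x \<circ> r) \<longlonglongrightarrow> l \<Longrightarrow> l = L"
  shows "x \<longlonglongrightarrow> L"
proof (rule ccontr)
  assume "\<not> x \<longlonglongrightarrow> L"
  then obtain e where "e > 0" and "\<exists>\<^sub>F N in sequentially. e \<le> dist (x N) L"
    unfolding tendsto_iff by (auto simp: not_eventually not_less)
  then have "infinite {N. e \<le> dist (x N) L}"
    by (simp add: frequently_cofinite[symmetric] cofinite_eq_sequentially)
  from infinite_enumerate[OF this] obtain s :: "nat \<Rightarrow> nat"
    where s: "strict_mono s" "\<And>N. e \<le> dist (x (s N)) L"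
    by auto
  have "bounded (range (x \<circ> s))"
    using assms(1) by (rule bounded_subset) auto
  then obtain t l where t: "strict_mono t" "((x \<circ> s) \<circ> t) \<longlonglongrightarrow> l"
    using bounded_imp_convergent_subsequence by blast
  have "l = L"
    using assms(2)[OF strict_mono_o[OF s(1) t(1)]] t(2) by (simp add: o_assoc)
  with t(2) have "\<forall>\<^sub>F N in sequentially. dist (x (s (t N))) L < e"
    using \<open>e > 0\<close> by (auto simp: tendsto_iff)
  then show False using s(2) by (auto simp: eventually_sequentially not_less[symmetric])
qed

lemma stochastic_mat_avg_converges:
  fixes M :: "real^'n::finite^'n"
  assumes "stochastic M"
  obtains L where "mat_avg M \<longlonglongrightarrow> L" and "stochastic L" and "L ** M = L"
proof -
  have bounded: "bounded (range (mat_avg M))"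
    using norm_mat_avg_le[OF assms] by (auto simp: bounded_iff)
  then obtain r L where r: "strict_mono r" "(mat_avg M \<circ> r) \<longlonglongrightarrow> L"
    using bounded_imp_convergent_subsequence by blast
  have lim: "mat_avg M \<longlonglongrightarrow> L"
    using bounded
  proof (rule LIMSEQ_if_bounded_unique_subsequential_limit)
    show "l = L" if "strict_mono r'" "(mat_avg M \<circ> r') \<longlonglongrightarrow> l" for r' l
      using mat_avg_limit_points_eq[OF assms that[unfolded o_def] r[unfolded o_def]] .
  qed
  moreover have "stochastic L"
  proof -
    have "\<forall>\<^sub>F N in sequentially. mat_avg M N \<in> Collect stochastic"
      using eventually_gt_at_top[of 0] by (rule eventually_mono) (simp add: stochastic_mat_avg[OF assms])
    from Lim_in_closed_set[OF closed_stochastic this _ lim] show ?thesis by simp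
  qed
  moreover have "L ** M = L"
    using mat_avg_limit_point_invariant(1)[OF assms strict_mono_id] lim by simp
  ultimately show ?thesis using that by blast
qed

section \<open>Memory-one play as a Markov chain\<close>

lemma UNIV_outcome: "(UNIV :: outcome set) = {CC, CD, DC, DD}"
  using outcome.exhaust by blast

instance outcome :: finite
  by standard (simp add: UNIV_outcome)

lemma outcomes_eq_UNIV: "outcomes = UNIV"
  by (simp add: outcomes_def UNIV_outcome)

lemma sum_UNIV_outcome: "(\<Sum>k\<in>UNIV. f k) = f CC + f CD + f DC + (f DD :: real)"
  by (simp add: UNIV_outcome)

lemma xc_swap [simp]: "xc (swap k) = yc k"
  by (cases k) auto

lemma yc_swap [simp]: "yc (swap k) = xc k"
  by (cases k) auto

lemma SX_swap [simp]: "SX R P (swap k) = SY R P k"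
  by (cases k) auto

definition mem1_transition :: "(outcome \<Rightarrow> real) \<Rightarrow> (outcome \<Rightarrow> real) \<Rightarrow> real^outcome^outcome" where
  "mem1_transition p p' = (\<chi> h k. choice_prob (p h) (xc k) * choice_prob (p' (swap h)) (yc k))"

definition initial_dist :: "bool \<Rightarrow> bool \<Rightarrow> real^outcome" where
  "initial_dist x0 y0 =
     (\<chi> k. choice_prob (if x0 then 1 else 0) (xc k) * choice_prob (if y0 then 1 else 0) (yc k))"

lemma stochastic_mem1_transition:
  assumes "memory_one p" "memory_one p'" shows "stochastic (mem1_transition p p')"
  using assms by (auto simp: stochastic_def mem1_transition_def memory_one_def sum_UNIV_outcome
      choice_prob_def algebra_simps)

lemma round_dist_0: "round_dist p x0 (mem1_pattern p' y0) 0 k = initial_dist x0 y0 $ k"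
proof -
  have "{h. set h \<subseteq> outcomes \<and> length h = Suc 0 \<and> hd h = k} = {[k]}"
    by (auto simp: outcomes_eq_UNIV length_Suc_conv)
  then show ?thesis by (simp add: round_dist_def initial_dist_def mem1_pattern_def)
qed

lemma round_dist_Suc:
  "round_dist p x0 (mem1_pattern p' y0) (Suc n) k =
    (\<Sum>h\<in>UNIV. round_dist p x0 (mem1_pattern p' y0) n h * mem1_transition p p' $ h $ k)"
proof -
  let ?q = "mem1_pattern p' y0"
  define H where "H = {hs :: outcome list. length hs = Suc n}"
  have "finite H"
    using finite_lists_length_eq[of "UNIV :: outcome set"] by (simp add: H_def)
  have H_Suc: "{hs. set hs \<subseteq> outcomes \<and> length hs = Suc (Suc n) \<and> hd hs = k} = (#) k ` H"
    by (force simp: outcomes_eq_UNIV H_def length_Suc_conv)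
  have H_hd: "{hs \<in> H. hd hs = h} = {hs. set hs \<subseteq> outcomes \<and> length hs = Suc n \<and> hd hs = h}" for h
    by (auto simp: H_def outcomes_eq_UNIV)
  have "round_dist p x0 ?q (Suc n) k = (\<Sum>hs\<in>H. hist_prob p x0 ?q (k # hs))"
    unfolding round_dist_def H_Suc by (simp add: sum.reindex)
  also have "\<dots> = (\<Sum>hs\<in>H. hist_prob p x0 ?q hs * mem1_transition p p' $ hd hs $ k)"
    by (rule sum.cong) (auto simp: H_def mem1_transition_def mem1_pattern_def)
  also have "\<dots> = (\<Sum>h\<in>UNIV. \<Sum>hs\<in>{hs \<in> H. hd hs = h}.
      hist_prob p x0 ?q hs * mem1_transition p p' $ hd hs $ k)"
    by (rule sum.group[symmetric]) (simp_all add: \<open>finite H\<close>)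
  also have "\<dots> = (\<Sum>h\<in>UNIV. round_dist p x0 ?q n h * mem1_transition p p' $ h $ k)"
    unfolding round_dist_def H_hd[symmetric] sum_distrib_right by (intro sum.cong) auto
  finally show ?thesis .
qed

lemma round_dist_eq_matpow:
  "(\<chi> k. round_dist p x0 (mem1_pattern p' y0) n k) = initial_dist x0 y0 v* matpow (mem1_transition p p') n"
proof (induction n)
  case 0
  then show ?case by (simp add: vec_eq_iff round_dist_0)
next
  case (Suc n)
  have "(\<chi> k. round_dist p x0 (mem1_pattern p' y0) (Suc n) k)
      = (\<chi> k. round_dist p x0 (mem1_pattern p' y0) n k) v* mem1_transition p p'"
    by (simp add: vec_eq_iff round_dist_Suc vector_matrix_mult_def mult.commute)
  then show ?case by (simp add: Suc.IH vector_matrix_mul_assoc)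
qed

lemma cesaro_eq_mat_avg:
  "(\<chi> k. cesaro p x0 (mem1_pattern p' y0) N k) = initial_dist x0 y0 v* mat_avg (mem1_transition p p') N"
proof -
  have "(\<chi> k. cesaro p x0 (mem1_pattern p' y0) N k)
      = (1 / real N) *\<^sub>R (\<Sum>n<N. (\<chi> k. round_dist p x0 (mem1_pattern p' y0) n k))"
    by (simp add: vec_eq_iff cesaro_def)
  then show ?thesis
    by (simp add: round_dist_eq_matpow mat_avg_def vector_matrix_mult_scaleR_right
        vector_matrix_mult_sum_right)
qed

lemma mem1_cesaro_converges:
  assumes "memory_one p" "memory_one p'"
  obtains v where "\<And>k. (\<lambda>N. cesaro p x0 (mem1_pattern p' y0) N k) \<longlonglongrightarrow> v k"
    and "\<And>k. 0 \<le> v k" and "v CC + v CD + v DC + v DD = 1"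
    and "\<And>k. v k = (\<Sum>h\<in>UNIV. v h * mem1_transition p p' $ h $ k)"
proof -
  obtain L where L: "mat_avg (mem1_transition p p') \<longlonglongrightarrow> L" "stochastic L" "L ** mem1_transition p p' = L"
    using stochastic_mat_avg_converges[OF stochastic_mem1_transition[OF assms]] .
  define w where "w = initial_dist x0 y0 v* L"
  have "(\<lambda>N. \<chi> k. cesaro p x0 (mem1_pattern p' y0) N k) \<longlonglongrightarrow> w"
    unfolding cesaro_eq_mat_avg w_def by (intro tendsto_vector_matrix_mult tendsto_const L(1))
  then have "(\<lambda>N. cesaro p x0 (mem1_pattern p' y0) N k) \<longlonglongrightarrow> w $ k" for k
    using tendsto_vec_nth by fastforce
  moreover have "0 \<le> w $ k" for k
    using L(2) by (auto simp: w_def vector_matrix_mult_def stochastic_def initial_dist_def choice_prob_def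
        intro!: sum_nonneg)
  moreover have "(\<Sum>k\<in>UNIV. w $ k) = 1"
  proof -
    have "(\<Sum>k\<in>UNIV. w $ k) = (\<Sum>h\<in>UNIV. initial_dist x0 y0 $ h * (\<Sum>k\<in>UNIV. L $ h $ k))"
      by (simp add: w_def vector_matrix_mult_def sum_distrib_left) (rule sum.swap)
    also have "\<dots> = 1"
      using L(2) by (simp add: stochastic_def sum_UNIV_outcome initial_dist_def choice_prob_def)
    finally show ?thesis .
  qed
  moreover have "w v* mem1_transition p p' = w"
    by (simp add: w_def vector_matrix_mul_assoc L(3))
  ultimately show ?thesis
    by (intro that[of "\<lambda>k. w $ k"]) (simp_all add: sum_UNIV_outcome vector_matrix_mult_def vec_eq_iff)
qed

lemma stationary_on_DD_imp_firm:
  assumes "memory_one p" "memory_one p'"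
    and "\<And>k. 0 \<le> v k" "v CC + v CD + v DC + v DD = 1"
    and "\<And>k. v k = (\<Sum>h\<in>UNIV. v h * mem1_transition p p' $ h $ k)"
    and "v DD = 1"
  shows "firm p'"
proof -
  have "v CC = 0" "v CD = 0" "v DC = 0"
    using assms(3)[of CC] assms(3)[of CD] assms(3)[of DC] assms(4,6) by linarith+
  then have "(1 - p DD) * (1 - p' DD) = 1"
    using assms(5)[of DD] assms(6) by (simp add: sum_UNIV_outcome mem1_transition_def choice_prob_def)
  moreover have "(1 - p DD) * (1 - p' DD) \<le> 1 - p' DD"
    using assms(1,2) by (intro mult_left_le_one_le) (auto simp: memory_one_def)
  moreover have "0 \<le> p' DD"
    using assms(2) by (simp add: memory_one_def)
  ultimately show ?thesis
    unfolding firm_def by linarith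
qed

lemma round_dist_swap:
  "round_dist p x0 (mem1_pattern p' y0) n k = round_dist p' y0 (mem1_pattern p x0) n (swap k)"
proof (induction n arbitrary: k)
  case 0
  then show ?case by (simp add: round_dist_0 initial_dist_def)
next
  case (Suc n)
  then show ?case
    by (simp add: round_dist_Suc sum_UNIV_outcome mem1_transition_def)
qed

lemma round_dist_firm_self:
  assumes "firm p"
  shows "round_dist p False (mem1_pattern p False) n k = (if k = DD then 1 else 0)"
proof (induction n arbitrary: k)
  case 0
  then show ?case by (cases k) (simp_all add: round_dist_0 initial_dist_def choice_prob_def)
next
  case (Suc n)
  then show ?case
    using assms by (cases k) (simp_all add: round_dist_Suc sum_UNIV_outcome mem1_transition_def
        choice_prob_def firm_def)
qed

lemma payoffA_firm_self:
  assumes "firm p"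
  shows "payoffA R P (p, False) (p, False) = P"
proof -
  have "dot (cesaro p False (mem1_pattern p False) N) (SX R P) = P" if "N > 0" for N
    using that by (simp add: dot_def outcomes_def cesaro_def round_dist_firm_self[OF assms])
  then have "(\<lambda>N. dot (cesaro p False (mem1_pattern p False) N) (SX R P)) \<longlonglongrightarrow> P"
    by (intro tendsto_eventually) (use eventually_gt_at_top[of 0] in \<open>rule eventually_mono, simp\<close>)
  then show ?thesis
    by (simp add: payoffA_def limI)
qed

lemma payoffA_eq_opponent_limit:
  assumes "\<And>k. (\<lambda>N. cesaro p x0 (mem1_pattern p' y0) N k) \<longlonglongrightarrow> v k"
  shows "payoffA R P (p', y0) (p, x0) = dot v (SY R P)"
proof -
  have "dot (cesaro p' y0 (mem1_pattern p x0) N) (SX R P)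
      = dot (cesaro p x0 (mem1_pattern p' y0) N) (SY R P)" for N
    by (simp add: dot_def outcomes_def cesaro_def round_dist_swap[of p x0 p' y0]
        add_divide_distrib[symmetric] algebra_simps)
  moreover have "(\<lambda>N. dot (cesaro p x0 (mem1_pattern p' y0) N) (SY R P)) \<longlonglongrightarrow> dot v (SY R P)"
    unfolding dot_def by (intro tendsto_intros assms)
  ultimately show ?thesis
    by (simp add: payoffA_def limI)
qed

theorem theorem5p4:
  fixes R P :: real
    and I :: "'i set"
    and strat :: "'i \<Rightarrow> (outcome \<Rightarrow> real) \<times> bool"
    and istar :: 'i
  assumes "0 < P" and "P < R" and "R < 1" and "2 * R > 1"
    and "finite I"
    and "\<forall>i\<in>I. memory_one (fst (strat i))"
    and "istar \<in> I"
    and "strictly_firm R P (fst (strat istar))"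
    and "snd (strat istar) = False"
    and "\<forall>j\<in>I. j \<noteq> istar \<longrightarrow> \<not> firm (fst (strat j))"
  shows "ESS I (\<lambda>i j. payoffA R P (strat i) (strat j)) istar"
  unfolding ESS_def
proof (intro ballI impI)
  fix j assume j: "j \<in> I" "j \<noteq> istar"
  obtain p where strat_istar: "strat istar = (p, False)"
    using assms(9) by (cases "strat istar") simp
  obtain p' y0 where strat_j: "strat j = (p', y0)"
    by (cases "strat j")
  have p: "memory_one p" "strictly_firm R P p"
    using assms(6)[rule_format, OF assms(7)] assms(8) by (simp_all add: strat_istar)
  have p': "memory_one p'" "\<not> firm p'"
    using assms(6)[rule_format, OF j(1)] assms(10)[rule_format, OF j] by (simp_all add: strat_j)
  obtain v where lim: "\<And>k. (\<lambda>N. cesaro p False (mem1_pattern p' y0) N k) \<longlonglongrightarrow> v k"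
    and stationary: "\<And>k. 0 \<le> v k" "v CC + v CD + v DC + v DD = 1"
      "\<And>k. v k = (\<Sum>h\<in>UNIV. v h * mem1_transition p p' $ h $ k)"
    using mem1_cesaro_converges[OF p(1) p'(1)] by blast
  have "limit_dist p False (mem1_pattern p' y0) v"
    unfolding limit_dist_def by (intro exI[of _ id] conjI allI) (simp_all add: strict_mono_id lim)
  moreover have "pattern (mem1_pattern p' y0)"
    using p'(1) by (simp add: pattern_def mem1_pattern_def memory_one_def)
  ultimately have "P \<le> dot v (SY R P) \<longrightarrow> v DD = 1"
    using p(2) unfolding strictly_firm_def by blast
  moreover have "v DD \<noteq> 1"
    using stationary_on_DD_imp_firm[OF p(1) p'(1) stationary] p'(2) by blast
  ultimately have "dot v (SY R P) < P"
    by linarith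
  moreover have "firm p"
    using p(2) by (simp add: strictly_firm_def)
  ultimately show "payoffA R P (strat j) (strat istar) < payoffA R P (strat istar) (strat istar)"
    by (simp add: strat_istar strat_j payoffA_eq_opponent_limit[OF lim] payoffA_firm_self)
qed
end
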